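(* Let $G$ be a finitely generated group, $\mathcal{P}=\{P_i\}$ a finite collection of infinite subgroups and $X\subseteq G$ a generating set of $G$ with $\mathcal{P}\hookrightarrow_h(G,X)$. Let $\delta$ be a constant such that for every $r\in\mathbb{N}\cup\{0\}$ the space $\mathbb{G}_r=\mathbb{K}_r(G,X,\cup_iX_i,\{P_i\})$ is $\delta$-hyperbolic. Then for every $L>\delta$ and every $r$, every coned-off $L$-horoball is convex in $\mathbb{G}_r$.
   Context: $\mathcal{P}\hookrightarrow_h(G,X)$: $G=\langle X\cup\bigcup\mathcal{P}\rangle$, the Cayley graph with respect to $X\sqcup\bigsqcup\mathcal{P}$ is hyperbolic, and each $P_i$ is locally finite for $\hat d_i(h,k)$ = length of a shortest path from $h$ to $k$ in that Cayley graph using no edge labelled by an element of $P_i$ with both endpoints in $P_i$. Construction of $\mathbb{K}_r$: fix a strongly bounded relative presentation $\langle X,\mathcal{P}\mid\mathcal{S}\cup\mathcal{R}\rangle$ of $G$ ($\mathcal{S}$ = all relations of the $P_i$; relators in $\mathcal{R}$ have bounded length and only finitely many letters of each $P_i$ occur in $\mathcal{R}$). Let $X_i$ be the letters from $P_i\setminus\{1\}$ occurring in $\mathcal{R}$, $\mathcal{X}=X\cup\bigcup X_i$. For a graph $\Gamma$, the combinatorial horoball $\mathcal{H}(\Gamma)$ has vertices $\Gamma^{(0)}\times\mathbb{Z}_{\ge0}$ (depth = second coordinate), the edges of $\Gamma$ at depth 0, horizontal edges $(v,n)$–$(w,n)$ for $n\ge1$, $0<d_\Gamma(v,w)\le2^n$,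 and vertical edges $(v,n)$–$(v,n+1)$; the coned-off horoball $\mathcal{H}_r(\Gamma)$ adds an apex joined to all vertices of depth $\ge r$ (the apex is considered to have depth $r+1$). $\mathbb{K}_r(G,X,\cup_iX_i,\{P_i\})$ is the Cayley graph $\Gamma(G,\mathcal{X})$ with a copy of $\mathcal{H}_r(g\Gamma(P_i,X_i))$ glued at depth 0 along $g\Gamma(P_i,X_i)$ for every coset $gP_i$. For $L\ge1$, the coned-off $L$-horoball contained in the coned-off horoball $\mathcal{H}_r(g\Gamma(P_i,X_i))$ is the subgraph spanned by its vertices of depth at least $L$ (including the apex). A subset is convex if every geodesic of $\mathbb{G}_r$ joining two of its points lies in it. *)

theory Defs
  imports Complex_Main "HOL-Algebra.Generated_Groups" "HOL-Algebra.Coset"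
    "HOL-Library.Extended_Nat"
begin

definition walk :: "'v set \<Rightarrow> ('v \<times> 'v) set \<Rightarrow> 'v list \<Rightarrow> bool" where
  "walk V E xs \<longleftrightarrow> xs \<noteq> [] \<and> set xs \<subseteq> V \<and>
     (\<forall>k. Suc k < length xs \<longrightarrow> (xs ! k, xs ! Suc k) \<in> E)"

text \<open>Combinatorial graph distance (infinite if no walk exists).\<close>
definition gdist :: "'v set \<Rightarrow> ('v \<times> 'v) set \<Rightarrow> 'v \<Rightarrow> 'v \<Rightarrow> enat" where
  "gdist V E u v = (INF xs\<in>{xs. walk V E xs \<and> hd xs = u \<and> last xs = v}.
                       enat (length xs - 1))"

definition geodesic :: "'v set \<Rightarrow> ('v \<times> 'v) set \<Rightarrow> 'v list \<Rightarrow> bool" where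
  "geodesic V E xs \<longleftrightarrow> walk V E xs \<and>
     enat (length xs - 1) = gdist V E (hd xs) (last xs)"

definition hyp_graph :: "real \<Rightarrow> 'v set \<Rightarrow> ('v \<times> 'v) set \<Rightarrow> bool" where
  "hyp_graph \<delta> V E \<longleftrightarrow>
     (\<forall>p q s. geodesic V E p \<and> geodesic V E q \<and> geodesic V E s \<and>
        last p = hd q \<and> last q = hd s \<and> last s = hd p \<longrightarrow>
        (\<forall>v\<in>set p. \<exists>w\<in>set q \<union> set s. \<exists>n::nat.
            gdist V E v w = enat n \<and> real n \<le> \<delta>))"

definition hyperbolic_graph :: "'v set \<Rightarrow> ('v \<times> 'v) set \<Rightarrow> bool" where
  "hyperbolic_graph V E \<longleftrightarrow> (\<exists>\<delta>. hyp_graph \<delta> V E)"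

definition convex_in :: "'v set \<Rightarrow> ('v \<times> 'v) set \<Rightarrow> 'v set \<Rightarrow> bool" where
  "convex_in V E S \<longleftrightarrow>
     (\<forall>xs. geodesic V E xs \<and> hd xs \<in> S \<and> last xs \<in> S \<longrightarrow> set xs \<subseteq> S)"

definition fin_gen :: "('g, 'b) monoid_scheme \<Rightarrow> bool" where
  "fin_gen G \<longleftrightarrow> (\<exists>S. finite S \<and> S \<subseteq> carrier G \<and> generate G S = carrier G)"

definition lcosets_of :: "('g, 'b) monoid_scheme \<Rightarrow> 'g set \<Rightarrow> 'g set set" where
  "lcosets_of G H = {g <#\<^bsub>G\<^esub> H | g. g \<in> carrier G}"

definition cay_edges :: "('g, 'b) monoid_scheme \<Rightarrow> 'g set \<Rightarrow> 'g set \<Rightarrow> ('g \<times> 'g) set" where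
  "cay_edges G C A = (let E = {(u, u \<otimes>\<^bsub>G\<^esub> a) | u a. u \<in> C \<and> a \<in> A \<and> u \<otimes>\<^bsub>G\<^esub> a \<in> C}
                      in E \<union> E\<inverse>)"

text \<open>Labels of the alphabet X \<squnion> \<Squnion>P_i (disjoint union, letters tagged).\<close>
datatype ('g, 'i) label = LX 'g | LP 'i 'g

fun lab_elt :: "('g, 'i) label \<Rightarrow> 'g" where
  "lab_elt (LX x) = x" | "lab_elt (LP i p) = p"

definition labels :: "'g set \<Rightarrow> 'i set \<Rightarrow> ('i \<Rightarrow> 'g set) \<Rightarrow> ('g, 'i) label set" where
  "labels X I P = LX ` X \<union> {LP i p | i p. i \<in> I \<and> p \<in> P i}"

definition lcay_edges :: "('g, 'b) monoid_scheme \<Rightarrow> 'g set \<Rightarrow> 'i set \<Rightarrow> ('i \<Rightarrow> 'g set)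
    \<Rightarrow> ('g \<Rightarrow> ('g, 'i) label \<Rightarrow> bool) \<Rightarrow> ('g \<times> 'g) set" where
  "lcay_edges G X I P ok =
     (let E = {(g, g \<otimes>\<^bsub>G\<^esub> lab_elt a) | g a. g \<in> carrier G \<and> a \<in> labels X I P \<and> ok g a}
      in E \<union> E\<inverse>)"

text \<open>The relative metric d-hat_i: paths avoiding edges labelled by elements of P_i
with both endpoints in P_i.\<close>
definition dhat :: "('g, 'b) monoid_scheme \<Rightarrow> 'g set \<Rightarrow> 'i set \<Rightarrow> ('i \<Rightarrow> 'g set) \<Rightarrow> 'i
    \<Rightarrow> 'g \<Rightarrow> 'g \<Rightarrow> enat" where
  "dhat G X I P i = gdist (carrier G)
     (lcay_edges G X I P (\<lambda>g a. \<not> (\<exists>p. a = LP i p \<and> g \<in> P i)))"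

definition hyp_embedded :: "('g, 'b) monoid_scheme \<Rightarrow> 'g set \<Rightarrow> 'i set \<Rightarrow> ('i \<Rightarrow> 'g set) \<Rightarrow> bool" where
  "hyp_embedded G X I P \<longleftrightarrow>
     generate G (X \<union> (\<Union>i\<in>I. P i)) = carrier G \<and>
     hyperbolic_graph (carrier G) (lcay_edges G X I P (\<lambda>_ _. True)) \<and>
     (\<forall>i\<in>I. \<forall>h\<in>P i. \<forall>n::nat. finite {k \<in> P i. dhat G X I P i h k \<le> enat n})"

text \<open>Letters of words in the free product F(X) * (*_i P_i): x^{+1}/x^{-1} (bool = sign)
and letters p of P_i (tagged by i).\<close>
datatype ('g, 'i) rletter = RX 'g bool | RP 'i 'g

fun eval_letter :: "('g, 'b) monoid_scheme \<Rightarrow> ('g, 'i) rletter \<Rightarrow> 'g" where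
  "eval_letter G (RX x True) = x"
| "eval_letter G (RX x False) = inv\<^bsub>G\<^esub> x"
| "eval_letter G (RP i p) = p"

definition eval_word :: "('g, 'b) monoid_scheme \<Rightarrow> ('g, 'i) rletter list \<Rightarrow> 'g" where
  "eval_word G w = foldr (\<lambda>a g. eval_letter G a \<otimes>\<^bsub>G\<^esub> g) w \<one>\<^bsub>G\<^esub>"

definition valid_word :: "'g set \<Rightarrow> 'i set \<Rightarrow> ('i \<Rightarrow> 'g set) \<Rightarrow> ('g, 'i) rletter list \<Rightarrow> bool" where
  "valid_word X I P w \<longleftrightarrow>
     (\<forall>a\<in>set w. (\<exists>x b. a = RX x b \<and> x \<in> X) \<or> (\<exists>i p. a = RP i p \<and> i \<in> I \<and> p \<in> P i))"

text \<open>Elementary moves: free cancellation, the multiplication table of the P_i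
(the relations S), and insertion/deletion of relators from R.\<close>
inductive pstep :: "('g, 'b) monoid_scheme \<Rightarrow> ('i \<Rightarrow> 'g set) \<Rightarrow> ('g, 'i) rletter list set
    \<Rightarrow> ('g, 'i) rletter list \<Rightarrow> ('g, 'i) rletter list \<Rightarrow> bool"
  for G P R where
  free: "pstep G P R (u @ [RX x b, RX x (\<not> b)] @ v) (u @ v)"
| mult: "p \<in> P i \<Longrightarrow> q \<in> P i \<Longrightarrow>
         pstep G P R (u @ [RP i p, RP i q] @ v) (u @ [RP i (p \<otimes>\<^bsub>G\<^esub> q)] @ v)"
| one: "pstep G P R (u @ [RP i \<one>\<^bsub>G\<^esub>] @ v) (u @ v)"
| rel: "r \<in> R \<Longrightarrow> pstep G P R (u @ r @ v) (u @ v)"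

text \<open>Equality in F(X) * (*_i P_i) / <<R>>, on words over the alphabet.\<close>
definition pres_eq :: "('g, 'b) monoid_scheme \<Rightarrow> 'g set \<Rightarrow> 'i set \<Rightarrow> ('i \<Rightarrow> 'g set)
    \<Rightarrow> ('g, 'i) rletter list set \<Rightarrow> ('g, 'i) rletter list \<Rightarrow> ('g, 'i) rletter list \<Rightarrow> bool" where
  "pres_eq G X I P R = (\<lambda>u v. valid_word X I P u \<and> valid_word X I P v \<and>
        (pstep G P R u v \<or> pstep G P R v u))\<^sup>*\<^sup>*"

text \<open><X, P | S \<union> R> is a relative presentation of G: the natural map from the free
product F(X) * (*_i P_i) is onto G and its kernel is the normal closure of R.\<close>
definition rel_presentation :: "('g, 'b) monoid_scheme \<Rightarrow> 'g set \<Rightarrow> 'i set \<Rightarrow> ('i \<Rightarrow> 'g set)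
    \<Rightarrow> ('g, 'i) rletter list set \<Rightarrow> bool" where
  "rel_presentation G X I P R \<longleftrightarrow>
     (\<forall>r\<in>R. valid_word X I P r) \<and>
     generate G (X \<union> (\<Union>i\<in>I. P i)) = carrier G \<and>
     (\<forall>w. valid_word X I P w \<longrightarrow> (eval_word G w = \<one>\<^bsub>G\<^esub> \<longleftrightarrow> pres_eq G X I P R w []))"

definition strongly_bounded_rel_pres :: "('g, 'b) monoid_scheme \<Rightarrow> 'g set \<Rightarrow> 'i set
    \<Rightarrow> ('i \<Rightarrow> 'g set) \<Rightarrow> ('g, 'i) rletter list set \<Rightarrow> bool" where
  "strongly_bounded_rel_pres G X I P R \<longleftrightarrow>
     rel_presentation G X I P R \<and>
     (\<exists>N::nat. \<forall>r\<in>R. length r \<le> N) \<and>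
     (\<forall>i\<in>I. finite {p. \<exists>r\<in>R. RP i p \<in> set r})"

definition Xi :: "('g, 'b) monoid_scheme \<Rightarrow> ('i \<Rightarrow> 'g set) \<Rightarrow> ('g, 'i) rletter list set \<Rightarrow> 'i \<Rightarrow> 'g set" where
  "Xi G P R i = {p \<in> P i - {\<one>\<^bsub>G\<^esub>}. \<exists>r\<in>R. RP i p \<in> set r}"

text \<open>Vertices: Cayley vertices g (depth 0); horoball vertices (v, n) with n \<ge> 1 in the
horoball over the coset C of P_i; apexes. Depth-0 horoball vertices are the
Cayley vertices themselves (gluing).\<close>
datatype ('g, 'i) kvert = KG 'g | KH 'i "'g set" 'g nat | KA 'i "'g set"

definition hv :: "'i \<Rightarrow> 'g set \<Rightarrow> 'g \<Rightarrow> nat \<Rightarrow> ('g, 'i) kvert" where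
  "hv i C v n = (if n = 0 then KG v else KH i C v n)"

definition K_verts :: "('g, 'b) monoid_scheme \<Rightarrow> 'i set \<Rightarrow> ('i \<Rightarrow> 'g set) \<Rightarrow> ('g, 'i) kvert set" where
  "K_verts G I P =
     KG ` carrier G
     \<union> {KH i C v n | i C v n. i \<in> I \<and> C \<in> lcosets_of G (P i) \<and> v \<in> C \<and> 1 \<le> n}
     \<union> {KA i C | i C. i \<in> I \<and> C \<in> lcosets_of G (P i)}"

text \<open>Edges of the coned-off horoball H_r(C \<Gamma>(P_i, X_i)) for a coset C, where Gamma has
vertex set C and distance dG.\<close>
definition horo_edges :: "nat \<Rightarrow> 'i \<Rightarrow> 'g set \<Rightarrow> ('g \<times> 'g) set \<Rightarrow> ('g, 'i) kvert rel" where
  "horo_edges r i C EG =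
     (let E = {(KG v, KG w) | v w. (v, w) \<in> EG}
          \<union> {(KH i C v n, KH i C w n) | v w n. 1 \<le> n \<and> v \<in> C \<and> w \<in> C \<and>
                0 < gdist C EG v w \<and> gdist C EG v w \<le> enat (2 ^ n)}
          \<union> {(hv i C v n, KH i C v (Suc n)) | v n. v \<in> C}
          \<union> {(KA i C, hv i C v n) | v n. v \<in> C \<and> r \<le> n}
      in E \<union> E\<inverse>)"

definition calX :: "('g, 'b) monoid_scheme \<Rightarrow> 'g set \<Rightarrow> 'i set \<Rightarrow> ('i \<Rightarrow> 'g set)
    \<Rightarrow> ('g, 'i) rletter list set \<Rightarrow> 'g set" where
  "calX G X I P R = X \<union> (\<Union>i\<in>I. Xi G P R i)"

definition K_edges :: "('g, 'b) monoid_scheme \<Rightarrow> 'g set \<Rightarrow> 'i set \<Rightarrow> ('i \<Rightarrow> 'g set)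
    \<Rightarrow> ('g, 'i) rletter list set \<Rightarrow> nat \<Rightarrow> ('g, 'i) kvert rel" where
  "K_edges G X I P R r =
     {(KG g, KG h) | g h. (g, h) \<in> cay_edges G (carrier G) (calX G X I P R)}
     \<union> (\<Union>i\<in>I. \<Union>C\<in>lcosets_of G (P i). horo_edges r i C (cay_edges G C (Xi G P R i)))"

text \<open>The coned-off L-horoball in H_r(C \<Gamma>(P_i, X_i)) (L \<ge> 1): vertices of depth \<ge> L,
including the apex.\<close>
definition L_horoball :: "nat \<Rightarrow> 'i \<Rightarrow> 'g set \<Rightarrow> ('g, 'i) kvert set" where
  "L_horoball L i C = {KH i C v n | v n. v \<in> C \<and> L \<le> n} \<union> {KA i C}"

end

theory Submission
  imports Defs
begin

text \<open>
  The depth in the horoball over C, truncated at r with the apex one level deeper, changes by at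
  most one along each edge of K_r.

  If L \<le> r, join the endpoints of a geodesic with ends in the L-horoball to the apex by vertical
  geodesics, all of whose vertices have depth at least L > \<delta>. By \<delta>-slimness of the resulting
  triangle no vertex of the geodesic has depth 0, so it stays in the horoball over C. Pushing that
  horoball down to depth L maps edges to edges or points (horizontal edges persist at greater
  depth) and fixes the L-horoball, yet it collapses the first edge along which the geodesic leaves
  the L-horoball, which would yield a shorter path between its endpoints.

  If r < L, every vertex of the L-horoball is adjacent to the apex, so the geodesic has at most two
  edges, and a two-edge path leaving the L-horoball from a vertex other than the apex must return
  to that vertex.
\<close>

lemma walk_Cons:
  "walk V E (x # xs) \<longleftrightarrow> x \<in> V \<and> (xs = [] \<or> (x, hd xs) \<in> E \<and> walk V E xs)"
proof (cases xs)
  case (Cons y ys)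
  have "(\<forall>k. Suc k < length (x # xs) \<longrightarrow> ((x # xs) ! k, (x # xs) ! Suc k) \<in> E) \<longleftrightarrow>
        (x, y) \<in> E \<and> (\<forall>k. Suc k < length xs \<longrightarrow> (xs ! k, xs ! Suc k) \<in> E)"
    using Cons by (auto simp: All_less_Suc2 less_Suc_eq_0_disj)
  then show ?thesis using Cons by (auto simp: walk_def)
qed (simp add: walk_def)

lemma walk_append:
  assumes "walk V E p" "walk V E q" "last p = hd q"
  shows "walk V E (p @ tl q)"
  using assms
proof (induction p)
  case (Cons a p)
  show ?case
  proof (cases "p = []")
    case True
    with Cons.prems have "q = a # tl q" by (cases q) (auto simp: walk_def)
    with True Cons.prems show ?thesis by simp
  next
    case False
    with Cons show ?thesis by (auto simp: walk_Cons)
  qed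
qed (simp add: walk_def)

lemma walk_rev:
  assumes "sym E" "walk V E xs"
  shows "walk V E (rev xs)"
  using assms(2)
proof (induction xs)
  case (Cons a xs)
  show ?case
  proof (cases "xs = []")
    case False
    with Cons.prems have "a \<in> V" "(hd xs, a) \<in> E" "walk V E xs" "hd xs \<in> V"
      using \<open>sym E\<close> by (auto simp: walk_Cons dest: symD) (auto simp: walk_def)
    with Cons.IH have "walk V E (rev xs)" "walk V E [hd xs, a]" by (auto simp: walk_Cons)
    from walk_append[OF this] False show ?thesis by (simp add: last_rev)
  qed (use Cons.prems in simp)
qed (simp add: walk_def)

lemma gdist_le_walk:
  "walk V E xs \<Longrightarrow> gdist V E (hd xs) (last xs) \<le> enat (length xs - 1)"
  unfolding gdist_def by (rule INF_lower) auto

lemma gdist_enatE: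
  assumes "gdist V E u v = enat n"
  obtains xs where "walk V E xs" "hd xs = u" "last xs = v" "length xs - 1 = n"
proof -
  let ?S = "{xs. walk V E xs \<and> hd xs = u \<and> last xs = v}"
  have "?S \<noteq> {}"
  proof
    assume empty: "?S = {}"
    have "gdist V E u v = \<infinity>" unfolding gdist_def empty by (simp add: top_enat_def)
    with assms show False by simp
  qed
  then have "gdist V E u v \<in> (\<lambda>xs. enat (length xs - 1)) ` ?S"
    unfolding gdist_def Inf_enat_def by (auto intro: LeastI)
  with assms that show thesis by auto
qed

lemma gdist_refl:
  assumes "a \<in> V"
  shows "gdist V E a a = 0"
proof -
  have "gdist V E a a \<le> 0"
    using gdist_le_walk[of V E "[a]"] assms by (simp add: walk_def zero_enat_def)
  then show ?thesis by simp
qed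

lemma gdist_edge_le_1: "a \<in> V \<Longrightarrow> b \<in> V \<Longrightarrow> (a, b) \<in> E \<Longrightarrow> gdist V E a b \<le> 1"
  using gdist_le_walk[of V E "[a, b]"] by (simp add: walk_Cons one_enat_def)

lemma gdist_triangle: "gdist V E a c \<le> gdist V E a b + gdist V E b c"
proof (cases "gdist V E a b = \<infinity> \<or> gdist V E b c = \<infinity>")
  case False
  then obtain m n where m: "gdist V E a b = enat m" and n: "gdist V E b c = enat n"
    by auto
  obtain p where p: "walk V E p" "hd p = a" "last p = b" "length p - 1 = m"
    using gdist_enatE[OF m] .
  obtain q where q: "walk V E q" "hd q = b" "last q = c" "length q - 1 = n"
    using gdist_enatE[OF n] .
  have "p \<noteq> []" "q \<noteq> []" using p q by (auto simp: walk_def)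
  then have "last (p @ tl q) = c"
    using p q by (cases q) (auto simp: last_append)
  moreover have "hd (p @ tl q) = a" "length (p @ tl q) - 1 = m + n"
    using p(2,4) q(4) \<open>p \<noteq> []\<close> by (cases p; simp)+
  ultimately show ?thesis
    using gdist_le_walk[OF walk_append[OF p(1) q(1)]] p q m n by simp
qed auto

lemma gdist_sym:
  assumes "sym E"
  shows "gdist V E u v = gdist V E v u"
proof -
  have "gdist V E x y \<le> gdist V E y x" for x y
    unfolding gdist_def
  proof (rule INF_mono)
    fix xs assume "xs \<in> {xs. walk V E xs \<and> hd xs = y \<and> last xs = x}"
    then have "rev xs \<in> {xs. walk V E xs \<and> hd xs = x \<and> last xs = y}"
      using walk_rev[OF assms] by (auto simp: hd_rev last_rev)
    then show "\<exists>ys\<in>{xs. walk V E xs \<and> hd xs = x \<and> last xs = y}.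
        enat (length ys - 1) \<le> enat (length xs - 1)"
      by force
  qed
  then show ?thesis by (metis order_antisym)
qed

lemma geodesic_rev:
  assumes "sym E" "geodesic V E xs"
  shows "geodesic V E (rev xs)"
  using assms walk_rev[OF assms(1)] gdist_sym[OF assms(1)]
  by (auto simp: geodesic_def walk_def hd_rev last_rev)

lemma list_first_exit:
  assumes "hd xs \<in> S" "\<not> set xs \<subseteq> S"
  shows "\<exists>k. Suc k < length xs \<and> xs ! k \<in> S \<and> xs ! Suc k \<notin> S"
  using assms
proof (induction xs)
  case (Cons x xs)
  then have "xs \<noteq> []" by auto
  show ?case
  proof (cases "hd xs \<in> S")
    case True
    with Cons obtain k where "Suc k < length xs" "xs ! k \<in> S" "xs ! Suc k \<notin> S" by auto
    then show ?thesis by (intro exI[of _ "Suc k"]) auto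
  next
    case False
    with Cons.prems \<open>xs \<noteq> []\<close> show ?thesis by (intro exI[of _ 0]) (auto simp: hd_conv_nth)
  qed
qed simp

section \<open>Lipschitz functions and collapsing maps\<close>

lemma walk_lipschitz:
  assumes "walk V E xs" and lip: "\<And>a b. (a, b) \<in> E \<Longrightarrow> f b \<le> f a + (1::nat)"
  shows "f (last xs) \<le> f (hd xs) + (length xs - 1)"
  using assms(1)
proof (induction xs)
  case (Cons x xs)
  show ?case
  proof (cases "xs = []")
    case False
    with Cons.prems have "(x, hd xs) \<in> E" "walk V E xs" by (auto simp: walk_Cons)
    with Cons.IH lip have "f (last xs) \<le> f (hd xs) + (length xs - 1)" "f (hd xs) \<le> f x + 1"
      by auto
    with False show ?thesis by (cases xs) auto
  qed simp
qed (simp add: walk_def)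

lemma gdist_lipschitz:
  assumes "gdist V E u v = enat n" and "\<And>a b. (a, b) \<in> E \<Longrightarrow> f b \<le> f a + (1::nat)"
  shows "f v \<le> f u + n"
  using assms walk_lipschitz by (metis gdist_enatE)

lemma geodesic_if_lipschitz_tight:
  assumes "walk V E xs" and "\<And>a b. (a, b) \<in> E \<Longrightarrow> f b \<le> f a + (1::nat)"
    and "f (last xs) = f (hd xs) + (length xs - 1)"
  shows "geodesic V E xs"
proof -
  have le: "gdist V E (hd xs) (last xs) \<le> enat (length xs - 1)"
    using gdist_le_walk[OF assms(1)] .
  then obtain m where m: "gdist V E (hd xs) (last xs) = enat m"
    by (cases "gdist V E (hd xs) (last xs)") auto
  with gdist_lipschitz[where f = f, OF m assms(2)] assms(3) have "length xs - 1 \<le> m" by simp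
  with le m show ?thesis using assms(1) by (simp add: geodesic_def)
qed

lemma hyp_graph_lipschitz_slim:
  assumes "hyp_graph \<delta> V E" and lip: "\<And>a b. (a, b) \<in> E \<Longrightarrow> f b \<le> f a + (1::nat)"
    and "geodesic V E p" "geodesic V E q" "geodesic V E s"
    and "last p = hd q" "last q = hd s" "last s = hd p"
    and "\<forall>w\<in>set q \<union> set s. L \<le> f w" and "v \<in> set p"
  shows "real L \<le> real (f v) + \<delta>"
proof -
  obtain w n where "w \<in> set q \<union> set s" "gdist V E v w = enat n" "real n \<le> \<delta>"
    using assms(1,3-8,10) unfolding hyp_graph_def by blast
  moreover from this(2) have "f w \<le> f v + n" using lip by (rule gdist_lipschitz)
  ultimately have "real L \<le> real (f v) + real n" using assms(9) by force
  with \<open>real n \<le> \<delta>\<close> show ?thesis by linarith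
qed

lemma gdist_image_walk_le:
  assumes "walk V E xs" "f ` set xs \<subseteq> V"
    and "\<And>k. Suc k < length xs \<Longrightarrow> f (xs ! k) = f (xs ! Suc k) \<or> (f (xs ! k), f (xs ! Suc k)) \<in> E"
    and "j \<le> k" "k < length xs"
  shows "gdist V E (f (xs ! j)) (f (xs ! k)) \<le> enat (k - j)"
  using assms(4,5)
proof (induction k)
  case 0
  then have "f (xs ! 0) \<in> V" using assms(2) by auto
  with 0 show ?case by (simp add: gdist_refl)
next
  case (Suc k)
  show ?case
  proof (cases "j = Suc k")
    case True
    then have "f (xs ! j) \<in> V" using Suc.prems assms(2) by auto
    with True show ?thesis by (simp add: gdist_refl)
  next
    case False
    have "f (xs ! k) \<in> V" "f (xs ! Suc k) \<in> V" using Suc.prems assms(2) by auto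
    then have step: "gdist V E (f (xs ! k)) (f (xs ! Suc k)) \<le> 1"
      using assms(3)[of k] Suc.prems by (auto simp: gdist_refl gdist_edge_le_1)
    have "gdist V E (f (xs ! j)) (f (xs ! Suc k))
        \<le> gdist V E (f (xs ! j)) (f (xs ! k)) + gdist V E (f (xs ! k)) (f (xs ! Suc k))"
      by (rule gdist_triangle)
    also have "\<dots> \<le> enat (k - j) + 1"
      using Suc False step by (intro add_mono) auto
    also have "\<dots> = enat (Suc k - j)"
      using Suc.prems False by (simp add: one_enat_def)
    finally show ?thesis .
  qed
qed

lemma geodesic_image_no_collapse:
  assumes "geodesic V E xs" "f ` set xs \<subseteq> V"
    and step: "\<And>k. Suc k < length xs \<Longrightarrow> f (xs ! k) = f (xs ! Suc k) \<or> (f (xs ! k), f (xs ! Suc k)) \<in> E"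
    and "f (hd xs) = hd xs" "f (last xs) = last xs" "Suc k < length xs"
  shows "f (xs ! k) \<noteq> f (xs ! Suc k)"
proof
  assume collapse: "f (xs ! k) = f (xs ! Suc k)"
  have w: "walk V E xs" and ne: "xs \<noteq> []" using assms(1) by (auto simp: geodesic_def walk_def)
  let ?n = "length xs - 1"
  have ends: "hd xs = f (xs ! 0)" "last xs = f (xs ! ?n)"
    using assms(4,5) ne by (simp_all add: hd_conv_nth last_conv_nth)
  have "gdist V E (hd xs) (last xs)
      \<le> gdist V E (f (xs ! 0)) (f (xs ! k)) + gdist V E (f (xs ! k)) (f (xs ! ?n))"
    unfolding ends by (rule gdist_triangle)
  also have "\<dots> = gdist V E (f (xs ! 0)) (f (xs ! k)) + gdist V E (f (xs ! Suc k)) (f (xs ! ?n))"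
    by (simp only: collapse)
  also have "\<dots> \<le> enat (k - 0) + enat (?n - Suc k)"
    by (intro add_mono gdist_image_walk_le[OF w assms(2) step]) (use assms(6) in auto)
  finally have "enat ?n \<le> enat (k + (?n - Suc k))"
    using assms(1) by (simp add: geodesic_def)
  with assms(6) show False by simp
qed

lemma horo_edges_sym: "sym (horo_edges r i C EG)"
  unfolding horo_edges_def Let_def by (rule sym_Un_converse)

lemma horo_edge_from_KH:
  assumes "(KH i C u n, b) \<in> horo_edges r j C' EG"
  shows "j = i \<and> C' = C \<and> (b = KH i C u (Suc n) \<or> b = hv i C u (n - 1) \<or> (b = KA i C \<and> r \<le> n)
    \<or> (\<exists>w\<in>C. b = KH i C w n))"
  using assms unfolding horo_edges_def Let_def by (auto simp: hv_def split: if_splits)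

lemma horo_edge_from_KA:
  assumes "(KA i C, b) \<in> horo_edges r j C' EG"
  shows "j = i \<and> C' = C \<and> (\<exists>v\<in>C. \<exists>m\<ge>r. b = hv i C v m)"
  using assms unfolding horo_edges_def Let_def by (auto simp: hv_def split: if_splits)

lemma horo_edge_horizontal_mono:
  assumes "(KH i C u n, KH i C w n) \<in> horo_edges r i C EG" "n \<le> m"
  shows "(KH i C u m, KH i C w m) \<in> horo_edges r i C EG"
proof -
  have deeper: "d \<le> enat (2 ^ m)" if "d \<le> enat (2 ^ n)" for d
    using that assms(2) by (simp add: order_trans)
  from assms show ?thesis
    unfolding horo_edges_def Let_def by (auto simp: hv_def deeper split: if_splits)
qed

lemma cay_edges_sym: "sym (cay_edges G C A)"
  unfolding cay_edges_def Let_def by (rule sym_Un_converse)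

lemma K_edges_sym: "sym (K_edges G X I P R r)"
proof (rule symI)
  fix a b assume "(a, b) \<in> K_edges G X I P R r"
  then show "(b, a) \<in> K_edges G X I P R r"
    unfolding K_edges_def using cay_edges_sym horo_edges_sym by (fastforce dest: symD)
qed

lemma K_edge_from_KH:
  assumes "(KH i C u n, b) \<in> K_edges G X I P R r"
  shows "b = KH i C u (Suc n) \<or> b = hv i C u (n - 1) \<or> (b = KA i C \<and> r \<le> n)
    \<or> (\<exists>w\<in>C. b = KH i C w n)"
  using assms unfolding K_edges_def by (auto dest: horo_edge_from_KH)

lemma K_edge_from_KA:
  assumes "(KA i C, b) \<in> K_edges G X I P R r"
  shows "\<exists>v\<in>C. \<exists>m\<ge>r. b = hv i C v m"
  using assms unfolding K_edges_def by (auto dest: horo_edge_from_KA)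

lemma L_horoball_simps [simp]:
  "KH j C' u n \<in> L_horoball L i C \<longleftrightarrow> j = i \<and> C' = C \<and> u \<in> C \<and> L \<le> n"
  "KA j C' \<in> L_horoball L i C \<longleftrightarrow> j = i \<and> C' = C"
  "KG g \<notin> L_horoball L i C"
  unfolding L_horoball_def by auto

lemma hv_eq_hv_iff [simp]: "hv i C u m = hv i C w m \<longleftrightarrow> u = w"
  by (simp add: hv_def)

lemma K_edge_leaving_L_horoball:
  assumes "(KH i C u n, z) \<in> K_edges G X I P R r" "u \<in> C" "L \<le> n" "1 \<le> L"
    and "z \<notin> L_horoball L i C"
  shows "n = L \<and> z = hv i C u (L - 1)"
  using K_edge_from_KH[OF assms(1)] assms(2-5) by (auto simp: hv_def split: if_splits)

lemma K_edge_leaving_deep_L_horoball: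
  assumes "(a, z) \<in> K_edges G X I P R r" "a \<in> L_horoball L i C" "z \<notin> L_horoball L i C"
    and "1 \<le> L" "L \<le> r"
  shows "\<exists>u\<in>C. a = KH i C u L \<and> z = hv i C u (L - 1)"
proof (cases "a = KA i C")
  case True
  with assms(1) have "(KA i C, z) \<in> K_edges G X I P R r" by simp
  from K_edge_from_KA[OF this] obtain v m where "v \<in> C" "r \<le> m" "z = hv i C v m"
    by blast
  with assms show ?thesis by (auto simp: hv_def)
next
  case False
  with assms(2) obtain u n where a: "a = KH i C u n" and u: "u \<in> C" and n: "L \<le> n"
    by (auto simp: L_horoball_def)
  with assms(1) have "(KH i C u n, z) \<in> K_edges G X I P R r" by simp
  from K_edge_leaving_L_horoball[OF this u n assms(4,3)] show ?thesis using a u by auto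
qed

lemma K_edges_leaving_L_horoball_unique:
  assumes "(x, z) \<in> K_edges G X I P R r" "(y, z) \<in> K_edges G X I P R r"
    and "x \<in> L_horoball L i C - {KA i C}" "y \<in> L_horoball L i C - {KA i C}"
    and "z \<notin> L_horoball L i C" "1 \<le> L"
  shows "x = y"
proof -
  obtain u n u' n' where x: "x = KH i C u n" "u \<in> C" "L \<le> n"
    and y: "y = KH i C u' n'" "u' \<in> C" "L \<le> n'"
    using assms(3,4) by (auto simp: L_horoball_def)
  from K_edge_leaving_L_horoball[OF assms(1)[unfolded x(1)] x(2,3) assms(6,5)]
    K_edge_leaving_L_horoball[OF assms(2)[unfolded y(1)] y(2,3) assms(6,5)]
  show ?thesis using x(1) y(1) by auto
qed

section \<open>Depth and the retraction onto an L-horoball\<close>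

text \<open>Truncating at r, with the apex one level deeper, makes the depth 1-Lipschitz.\<close>

definition horo_depth :: "nat \<Rightarrow> 'i \<Rightarrow> 'g set \<Rightarrow> ('g, 'i) kvert \<Rightarrow> nat" where
  "horo_depth r i C z = (case z of
       KH j C' u m \<Rightarrow> if j = i \<and> C' = C then min m r else 0
     | KA j C' \<Rightarrow> if j = i \<and> C' = C then Suc r else 0
     | KG _ \<Rightarrow> 0)"

lemma horo_depth_lipschitz_horo_edges:
  assumes "(a, b) \<in> horo_edges r j C' EG"
  shows "horo_depth r i C b \<le> horo_depth r i C a + 1 \<and> horo_depth r i C a \<le> horo_depth r i C b + 1"
  using assms unfolding horo_edges_def Let_def by (auto simp: horo_depth_def hv_def)

lemma horo_depth_lipschitz:
  assumes "(a, b) \<in> K_edges G X I P R r"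
  shows "horo_depth r i C b \<le> horo_depth r i C a + 1"
  using assms horo_depth_lipschitz_horo_edges unfolding K_edges_def
  by (fastforce simp: horo_depth_def)

lemma horo_depth_outside:
  assumes "z \<in> K_verts G I P" "z \<notin> L_horoball 1 i C"
  shows "horo_depth r i C z = 0"
  using assms by (cases z) (auto simp: K_verts_def L_horoball_def horo_depth_def)

definition horo_retract :: "nat \<Rightarrow> 'i \<Rightarrow> 'g set \<Rightarrow> ('g, 'i) kvert \<Rightarrow> ('g, 'i) kvert" where
  "horo_retract L i C z = (case z of
       KH j C' u m \<Rightarrow> if j = i \<and> C' = C then KH j C' u (max m L) else z
     | _ \<Rightarrow> z)"

lemma horo_retract_simps [simp]:
  "horo_retract L i C (KH i C u m) = KH i C u (max m L)"
  "horo_retract L i C (KA i C) = KA i C"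
  by (simp_all add: horo_retract_def)

lemma horo_retract_fixes: "z \<in> L_horoball L i C \<Longrightarrow> horo_retract L i C z = z"
  by (auto simp: L_horoball_def max_def)

lemma horo_retract_in_L_horoball:
  "z \<in> L_horoball 1 i C \<Longrightarrow> horo_retract L i C z \<in> L_horoball L i C"
  by (auto simp: L_horoball_def)

context
  fixes G :: "('g, 'b) monoid_scheme" and I :: "'i set" and P :: "'i \<Rightarrow> 'g set"
    and X :: "'g set" and R :: "('g, 'i) rletter list set" and r :: nat and i :: 'i and C :: "'g set"
  assumes i: "i \<in> I" and C: "C \<in> lcosets_of G (P i)"
begin

abbreviation KV where "KV \<equiv> K_verts G I P"
abbreviation KE where "KE \<equiv> K_edges G X I P R r"

lemma L_horoball_subset_K_verts: "1 \<le> L \<Longrightarrow> L_horoball L i C \<subseteq> KV"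
  using i C unfolding L_horoball_def K_verts_def by auto

lemma horo_edge_in_K_edges: "(a, b) \<in> horo_edges r i C (cay_edges G C (Xi G P R i)) \<Longrightarrow> (a, b) \<in> KE"
  using i C unfolding K_edges_def by blast

lemma K_edge_vertical: "u \<in> C \<Longrightarrow> (hv i C u n, KH i C u (Suc n)) \<in> KE"
  by (rule horo_edge_in_K_edges) (auto simp: horo_edges_def Let_def)

lemma K_edge_apex: "u \<in> C \<Longrightarrow> r \<le> n \<Longrightarrow> (KA i C, hv i C u n) \<in> KE"
  by (rule horo_edge_in_K_edges) (auto simp: horo_edges_def Let_def)

lemma K_edge_horizontal_mono:
  assumes "(KH i C u n, KH i C w n) \<in> KE" "n \<le> m"
  shows "(KH i C u m, KH i C w m) \<in> KE"
proof -
  from assms(1) have "(KH i C u n, KH i C w n) \<in> horo_edges r i C (cay_edges G C (Xi G P R i))"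
    unfolding K_edges_def by (auto dest: horo_edge_from_KH)
  from horo_edge_horizontal_mono[OF this assms(2)] show ?thesis by (rule horo_edge_in_K_edges)
qed

lemma vertical_walk:
  assumes "u \<in> C" "1 \<le> n"
  shows "\<exists>q. walk KV KE q \<and> hd q = KH i C u n \<and> last q = KA i C
    \<and> length q = r - n + 2 \<and> set q \<subseteq> insert (KA i C) {KH i C u k | k. n \<le> k}"
  using assms(2)
proof (induction "r - n" arbitrary: n)
  case 0
  have "(KA i C, KH i C u n) \<in> KE"
    using K_edge_apex[OF assms(1), of n] 0 by (simp add: hv_def)
  then have "(KH i C u n, KA i C) \<in> KE"
    by (rule symD[OF K_edges_sym])
  then have "walk KV KE [KH i C u n, KA i C]"
    using L_horoball_subset_K_verts[of 1] 0 assms(1) by (auto simp: walk_Cons)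
  with 0 show ?case by (intro exI[of _ "[KH i C u n, KA i C]"]) auto
next
  case (Suc d)
  then have "d = r - Suc n" by arith
  from Suc.hyps(1)[OF this] obtain q where q: "walk KV KE q"
    "hd q = KH i C u (Suc n)" "last q = KA i C" "length q = r - Suc n + 2"
    "set q \<subseteq> insert (KA i C) {KH i C u k | k. Suc n \<le> k}"
    by auto
  have "q \<noteq> []" using q(1) by (simp add: walk_def)
  have "(KH i C u n, KH i C u (Suc n)) \<in> KE"
    using K_edge_vertical[OF assms(1), of n] Suc.prems by (simp add: hv_def)
  moreover have "KH i C u n \<in> KV"
    using L_horoball_subset_K_verts[of 1] assms(1) Suc.prems by auto
  ultimately have "walk KV KE (KH i C u n # q)"
    using q(1,2) \<open>q \<noteq> []\<close> by (simp add: walk_Cons)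
  moreover have "set (KH i C u n # q) \<subseteq> insert (KA i C) {KH i C u k | k. n \<le> k}"
    using q(5) by auto
  ultimately show ?case
    using q(3,4) \<open>q \<noteq> []\<close> Suc.hyps(2) by (intro exI[of _ "KH i C u n # q"]) auto
qed

lemma vertical_geodesic:
  assumes "1 \<le> L" "L \<le> r" "x \<in> L_horoball L i C"
  shows "\<exists>q. geodesic KV KE q \<and> hd q = x \<and> last q = KA i C \<and> (\<forall>w\<in>set q. L \<le> horo_depth r i C w)"
proof (cases "x = KA i C")
  case True
  have "KA i C \<in> KV" using L_horoball_subset_K_verts[of 1] by auto
  then have "geodesic KV KE [KA i C]"
    by (intro geodesic_if_lipschitz_tight[where f = "horo_depth r i C"] horo_depth_lipschitz)
       (auto simp: walk_def)
  with True assms(2) show ?thesis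
    by (intro exI[of _ "[KA i C]"]) (auto simp: horo_depth_def)
next
  case False
  with assms(3) obtain u n where x: "x = KH i C u n" "u \<in> C" "L \<le> n"
    by (auto simp: L_horoball_def)
  with assms(1) obtain q where q: "walk KV KE q" "hd q = x" "last q = KA i C"
    "length q = r - n + 2" "set q \<subseteq> insert (KA i C) {KH i C u k | k. n \<le> k}"
    using vertical_walk[of u n] by auto
  have "geodesic KV KE q"
    using q(1-4) x(1)
    by (intro geodesic_if_lipschitz_tight[where f = "horo_depth r i C"] horo_depth_lipschitz)
       (auto simp: horo_depth_def)
  moreover have "\<forall>w\<in>set q. L \<le> horo_depth r i C w"
    using q(5) x(3) assms(2) by (auto simp: horo_depth_def)
  ultimately show ?thesis using q(2,3) by blast
qed

lemma horo_retract_apex_edge: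
  assumes "(KA i C, z) \<in> KE" "z \<in> L_horoball 1 i C"
  shows "(KA i C, horo_retract L i C z) \<in> KE"
proof -
  from K_edge_from_KA[OF assms(1)] obtain v m where "v \<in> C" "r \<le> m" "z = hv i C v m"
    by blast
  with assms(2) show ?thesis
    using K_edge_apex[of v "max m L"] by (auto simp: hv_def split: if_splits)
qed

lemma horo_retract_edge:
  assumes "(a, b) \<in> KE" "a \<in> L_horoball 1 i C" "b \<in> L_horoball 1 i C"
  shows "horo_retract L i C a = horo_retract L i C b
    \<or> (horo_retract L i C a, horo_retract L i C b) \<in> KE"
proof -
  consider "a = KA i C" | "b = KA i C"
    | u n w m where "a = KH i C u n" "b = KH i C w m" "u \<in> C" "w \<in> C" "1 \<le> n" "1 \<le> m"
    using assms(2,3) by (auto simp: L_horoball_def)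
  then show ?thesis
  proof cases
    case 1
    then show ?thesis using horo_retract_apex_edge assms(1,3) by simp
  next
    case 2
    with assms(1) have "(KA i C, a) \<in> KE" by (simp add: symD[OF K_edges_sym])
    from horo_retract_apex_edge[OF this assms(2)]
    have "(horo_retract L i C a, KA i C) \<in> KE" by (rule symD[OF K_edges_sym])
    with 2 show ?thesis by simp
  next
    case ab: 3
    show ?thesis
    proof (cases "L \<le> n \<and> L \<le> m")
      case True
      then show ?thesis using assms ab by (simp add: horo_retract_fixes)
    next
      case False
      from assms(1) ab have edge: "(KH i C u n, KH i C w m) \<in> KE" by simp
      from K_edge_from_KH[OF this] consider
          "w = u" "m = Suc n" | "w = u" "m = n - 1" | "m = n"
        by (auto simp: hv_def split: if_splits)
      then show ?thesis
      proof cases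
        case 3
        from K_edge_horizontal_mono[OF edge[unfolded 3], of "max n L"] show ?thesis
          using ab 3 by simp
      qed (use False ab in \<open>auto simp: max_def\<close>)
    qed
  qed
qed

section \<open>Convexity of L-horoballs\<close>

lemma geodesic_stays_in_horoball:
  assumes hyp: "hyp_graph \<delta> KV KE" and "\<delta> < real L" "1 \<le> L" "L \<le> r"
    and geo: "geodesic KV KE xs" and ends: "hd xs \<in> L_horoball L i C" "last xs \<in> L_horoball L i C"
  shows "set xs \<subseteq> L_horoball 1 i C"
proof
  fix z assume z: "z \<in> set xs"
  have lip: "horo_depth r i C b \<le> horo_depth r i C a + 1" if "(a, b) \<in> KE" for a b
    using that by (rule horo_depth_lipschitz)
  obtain q where q: "geodesic KV KE q" "hd q = last xs" "last q = KA i C"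
    "\<forall>w\<in>set q. L \<le> horo_depth r i C w"
    using vertical_geodesic[OF assms(3,4) ends(2)] by blast
  obtain s where s: "geodesic KV KE s" "hd s = hd xs" "last s = KA i C"
    "\<forall>w\<in>set s. L \<le> horo_depth r i C w"
    using vertical_geodesic[OF assms(3,4) ends(1)] by blast
  have "\<forall>w\<in>set q \<union> set (rev s). L \<le> horo_depth r i C w" using q(4) s(4) by auto
  from hyp_graph_lipschitz_slim[where f = "horo_depth r i C", OF hyp lip geo q(1)
      geodesic_rev[OF K_edges_sym s(1)] _ _ _ this z]
  have "real L \<le> real (horo_depth r i C z) + \<delta>"
    using q(2,3) s(2,3) by (simp add: hd_rev last_rev)
  with assms(2) have "horo_depth r i C z \<noteq> 0" by auto
  moreover have "z \<in> KV" using geo z by (auto simp: geodesic_def walk_def)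
  ultimately show "z \<in> L_horoball 1 i C" using horo_depth_outside[of z G I P i C r] by auto
qed

lemma geodesic_horo_retract_no_collapse:
  assumes "1 \<le> L" and geo: "geodesic KV KE xs"
    and ends: "hd xs \<in> L_horoball L i C" "last xs \<in> L_horoball L i C"
    and in_horoball: "set xs \<subseteq> L_horoball 1 i C" and "Suc k < length xs"
  shows "horo_retract L i C (xs ! k) \<noteq> horo_retract L i C (xs ! Suc k)"
proof (rule geodesic_image_no_collapse[OF geo _ _ _ _ assms(6)])
  let ?f = "horo_retract L i C"
  have walk: "walk KV KE xs" using geo by (simp add: geodesic_def)
  show "?f ` set xs \<subseteq> KV"
  proof (rule image_subsetI)
    fix z assume "z \<in> set xs"
    with in_horoball have "?f z \<in> L_horoball L i C" by (blast intro: horo_retract_in_L_horoball)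
    then show "?f z \<in> KV" using L_horoball_subset_K_verts[OF assms(1)] by auto
  qed
  show "?f (hd xs) = hd xs" "?f (last xs) = last xs"
    using ends by (simp_all add: horo_retract_fixes)
  fix j assume j: "Suc j < length xs"
  with walk have "(xs ! j, xs ! Suc j) \<in> KE" unfolding walk_def by blast
  moreover have "xs ! j \<in> L_horoball 1 i C" "xs ! Suc j \<in> L_horoball 1 i C"
    using in_horoball j by auto
  ultimately show "?f (xs ! j) = ?f (xs ! Suc j) \<or> (?f (xs ! j), ?f (xs ! Suc j)) \<in> KE"
    by (rule horo_retract_edge)
qed

lemma L_horoball_convex_deep:
  assumes hyp: "hyp_graph \<delta> KV KE" and "\<delta> < real L" "1 \<le> L" "L \<le> r"
  shows "convex_in KV KE (L_horoball L i C)"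
  unfolding convex_in_def
proof (intro allI impI, elim conjE)
  let ?H = "L_horoball L i C"
  fix xs assume geo: "geodesic KV KE xs" and ends: "hd xs \<in> ?H" "last xs \<in> ?H"
  have in_horoball: "set xs \<subseteq> L_horoball 1 i C"
    by (rule geodesic_stays_in_horoball[OF assms geo ends])
  show "set xs \<subseteq> ?H"
  proof (rule ccontr)
    assume "\<not> set xs \<subseteq> ?H"
    then obtain k where k: "Suc k < length xs" "xs ! k \<in> ?H" "xs ! Suc k \<notin> ?H"
      using list_first_exit[OF ends(1)] by blast
    with geo have "(xs ! k, xs ! Suc k) \<in> KE" unfolding geodesic_def walk_def by blast
    from K_edge_leaving_deep_L_horoball[OF this k(2,3) assms(3,4)]
    obtain u where u: "xs ! k = KH i C u L" "xs ! Suc k = hv i C u (L - 1)" by blast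
    moreover have "xs ! Suc k \<in> L_horoball 1 i C" using in_horoball k(1) by auto
    ultimately have "xs ! Suc k = KH i C u (L - 1)" by (auto simp: hv_def split: if_splits)
    with u(1) have "horo_retract L i C (xs ! k) = horo_retract L i C (xs ! Suc k)" by simp
    with geodesic_horo_retract_no_collapse[OF assms(3) geo ends in_horoball k(1)] show False
      by contradiction
  qed
qed

lemma gdist_apex_le_1:
  assumes "r < L" "x \<in> L_horoball L i C"
  shows "gdist KV KE x (KA i C) \<le> 1"
proof (cases "x = KA i C")
  case True
  have "KA i C \<in> KV" using L_horoball_subset_K_verts[of 1] by auto
  with True show ?thesis by (simp add: gdist_refl)
next
  case False
  with assms(2) obtain u n where x: "x = KH i C u n" "u \<in> C" "L \<le> n"
    by (auto simp: L_horoball_def)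
  with assms(1) have "(KA i C, x) \<in> KE"
    using K_edge_apex[of u n] by (simp add: hv_def)
  then have "(x, KA i C) \<in> KE" by (rule symD[OF K_edges_sym])
  moreover have "x \<in> KV" "KA i C \<in> KV"
    using L_horoball_subset_K_verts[of 1] x assms(1) by auto
  ultimately show ?thesis by (simp add: gdist_edge_le_1)
qed

lemma gdist_shallow_L_horoball:
  assumes "r < L" "x \<in> L_horoball L i C" "y \<in> L_horoball L i C"
  shows "gdist KV KE x y \<le> 2" and "x = KA i C \<or> y = KA i C \<Longrightarrow> gdist KV KE x y \<le> 1"
proof -
  have to_apex: "gdist KV KE x (KA i C) \<le> 1"
    using gdist_apex_le_1[OF assms(1,2)] .
  have from_apex: "gdist KV KE (KA i C) y \<le> 1"
    using gdist_apex_le_1[OF assms(1,3)] gdist_sym[OF K_edges_sym] by metis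
  have "gdist KV KE x y \<le> 1 + 1"
    using gdist_triangle[of KV KE x y "KA i C"] add_mono[OF to_apex from_apex] by (rule order_trans)
  then show "gdist KV KE x y \<le> 2" by (simp add: one_add_one)
  show "gdist KV KE x y \<le> 1" if "x = KA i C \<or> y = KA i C"
    using that to_apex from_apex by auto
qed

lemma L_horoball_convex_shallow:
  assumes "r < L"
  shows "convex_in KV KE (L_horoball L i C)"
  unfolding convex_in_def
proof (intro allI impI, elim conjE)
  let ?H = "L_horoball L i C"
  fix xs assume geo: "geodesic KV KE xs" and ends: "hd xs \<in> ?H" "last xs \<in> ?H"
  then have walk: "walk KV KE xs" and len: "gdist KV KE (hd xs) (last xs) = enat (length xs - 1)"
    by (simp_all add: geodesic_def)
  show "set xs \<subseteq> ?H"
  proof (rule ccontr)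
    assume "\<not> set xs \<subseteq> ?H"
    then obtain k where k: "Suc k < length xs" "xs ! k \<in> ?H" "xs ! Suc k \<notin> ?H"
      using list_first_exit[OF ends(1)] by blast
    have "xs \<noteq> []" using k(1) by auto
    have "length xs - 1 \<le> 2"
      using gdist_shallow_L_horoball(1)[OF assms ends] unfolding len by (simp add: numeral_eq_enat)
    moreover have "xs ! Suc k \<noteq> last xs" using k(3) ends(2) by auto
    then have "Suc k \<noteq> length xs - 1" using \<open>xs \<noteq> []\<close> by (auto simp: last_conv_nth)
    ultimately have "k = 0" "length xs = 3" using k(1) by auto
    then have d2: "gdist KV KE (hd xs) (last xs) = 2" using len by (simp add: numeral_eq_enat)
    then have "hd xs \<noteq> KA i C" "last xs \<noteq> KA i C"
      using gdist_shallow_L_horoball(2)[OF assms ends] by (auto simp: one_enat_def numeral_eq_enat)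
    with ends have not_apex: "hd xs \<in> ?H - {KA i C}" "last xs \<in> ?H - {KA i C}" by auto
    have edges: "(hd xs, xs ! 1) \<in> KE" "(last xs, xs ! 1) \<in> KE"
    proof -
      have "(xs ! 0, xs ! 1) \<in> KE" "(xs ! 1, xs ! 2) \<in> KE"
        using walk \<open>length xs = 3\<close> unfolding walk_def by (auto simp: numeral_2_eq_2)
      with \<open>length xs = 3\<close> \<open>xs \<noteq> []\<close> show "(hd xs, xs ! 1) \<in> KE" "(last xs, xs ! 1) \<in> KE"
        by (auto simp: hd_conv_nth last_conv_nth intro: symD[OF K_edges_sym])
    qed
    have "xs ! 1 \<notin> ?H" "1 \<le> L" using k(3) \<open>k = 0\<close> assms by auto
    from K_edges_leaving_L_horoball_unique[OF edges not_apex this]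
    have "hd xs = last xs" .
    moreover have "last xs \<in> KV" using walk \<open>xs \<noteq> []\<close> by (auto simp: walk_def)
    ultimately show False using d2 by (simp add: gdist_refl)
  qed
qed

end

theorem lemma2p23:
  fixes G :: "('g, 'b) monoid_scheme" and I :: "'i set" and P :: "'i \<Rightarrow> 'g set"
    and X :: "'g set" and R :: "('g, 'i) rletter list set" and \<delta> :: real
  assumes "group G"
    and "fin_gen G"
    and "finite I"
    and "\<forall>i\<in>I. subgroup (P i) G \<and> infinite (P i)"
    and "X \<subseteq> carrier G" and "generate G X = carrier G"
    and "hyp_embedded G X I P"
    and "strongly_bounded_rel_pres G X I P R"
    and "\<forall>r::nat. hyp_graph \<delta> (K_verts G I P) (K_edges G X I P R r)"
  shows "\<forall>(L::nat) (r::nat) i C. 1 \<le> L \<longrightarrow> real L > \<delta> \<longrightarrow> i \<in> I \<longrightarrow> C \<in> lcosets_of G (P i) \<longrightarrow>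
           convex_in (K_verts G I P) (K_edges G X I P R r) (L_horoball L i C)"
proof (intro allI impI)
  fix L r :: nat and i C
  assume L: "1 \<le> L" "real L > \<delta>" and i: "i \<in> I" and C: "C \<in> lcosets_of G (P i)"
  show "convex_in (K_verts G I P) (K_edges G X I P R r) (L_horoball L i C)"
  proof (cases "L \<le> r")
    case True
    with assms(9) L show ?thesis
      by (blast intro: L_horoball_convex_deep[where G = G and P = P, OF i C])
  next
    case False
    then show ?thesis by (simp add: L_horoball_convex_shallow[where G = G and P = P, OF i C])
  qed
qed

end
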